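(* Let $M=\mathbb R^d$, $TM=\mathbb R^d\times\mathbb R^d$, and let $\phi:\mathcal P_2(M)\to(-\infty,\infty]$ and $\Phi:\mathcal P_2(TM)\to(-\infty,\infty]$ be lower semicontinuous for narrow convergence with $\Phi(\mu)=\phi(\pi^1_\#\mu)$ for all $\mu\in\mathcal P_2(TM)$. Let $\mu\in\mathcal P_2(TM)$ with $\Phi(\mu)<\infty$, and let $\varrho=\pi^1_\#\mu$. Then $|\partial\Phi|(\mu)=|\partial\phi|(\varrho)$.
   Context: $\mathcal P_2(X)$ carries the quadratic Wasserstein distance $W_2$; $\pi^1(x,v)=x$. For a function $\psi$ on a metric space $(\mathcal S,\mathrm{dist})$ and a point $v$ with $\psi(v)$ finite, the (global) metric slope is $|\partial\psi|(v):=\limsup_{w\to v}\frac{(\psi(v)-\psi(w))^+}{\mathrm{dist}(w,v)}$. *)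

theory Defs
  imports "HOL-Probability.Probability"
begin

definition P2 :: "('a::euclidean_space) measure set" where
  "P2 = {\<mu>. prob_space \<mu> \<and> sets \<mu> = sets borel \<and>
             (\<integral>\<^sup>+x. ennreal ((norm x)\<^sup>2) \<partial>\<mu>) < \<infinity>}"

definition couplings :: "('a::euclidean_space) measure \<Rightarrow> 'a measure \<Rightarrow> ('a \<times> 'a) measure set" where
  "couplings \<mu> \<nu> = {\<pi>. prob_space \<pi> \<and> sets \<pi> = sets borel \<and>
                        distr \<pi> borel fst = \<mu> \<and> distr \<pi> borel snd = \<nu>}"

definition W2 :: "('a::euclidean_space) measure \<Rightarrow> 'a measure \<Rightarrow> real" where
  "W2 \<mu> \<nu> = sqrt (enn2real (INF \<pi>\<in>couplings \<mu> \<nu>.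
                 \<integral>\<^sup>+p. ennreal ((dist (fst p) (snd p))\<^sup>2) \<partial>\<pi>))"

definition narrow_conv :: "(nat \<Rightarrow> ('a::euclidean_space) measure) \<Rightarrow> 'a measure \<Rightarrow> bool" where
  "narrow_conv \<mu>s \<mu> \<longleftrightarrow>
     (\<forall>f::'a \<Rightarrow> real. continuous_on UNIV f \<and> bounded (range f) \<longrightarrow>
        (\<lambda>n. \<integral>x. f x \<partial>(\<mu>s n)) \<longlonglongrightarrow> (\<integral>x. f x \<partial>\<mu>))"

definition narrow_lsc :: "(('a::euclidean_space) measure \<Rightarrow> ereal) \<Rightarrow> bool" where
  "narrow_lsc \<psi> \<longleftrightarrow>
     (\<forall>\<mu>s \<mu>. (\<forall>n. \<mu>s n \<in> P2) \<and> \<mu> \<in> P2 \<and> narrow_conv \<mu>s \<mu> \<longrightarrow>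
        \<psi> \<mu> \<le> liminf (\<lambda>n. \<psi> (\<mu>s n)))"

definition slope :: "'m set \<Rightarrow> ('m \<Rightarrow> 'm \<Rightarrow> real) \<Rightarrow> ('m \<Rightarrow> ereal) \<Rightarrow> 'm \<Rightarrow> ereal" where
  "slope S d \<psi> v = (INF r\<in>{0<..}. max 0 (SUP w\<in>{w\<in>S. 0 < d w v \<and> d w v < r}.
                        max 0 (\<psi> v - \<psi> w) / ereal (d w v)))"

end

theory Submission
  imports Defs
begin

(*
  Write p for the first-marginal map nu |-> pi1_# nu, so that Phi = phi o p on P2.  The map p is
  1-Lipschitz for W2, and W2 separates points of P2; hence every difference quotient of Phi at mu
  is dominated by a difference quotient of phi at rho = p mu, or vanishes.  Conversely p has
  almost isometric lifts: every rho' in P2 equals p nu for some nu with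
  W2 nu mu <= W2 rho' rho + delta, so every difference quotient of phi is dominated by one of Phi
  up to a factor tending to 1.  Both slopes are therefore equal.

  To lift rho', glue mu to a near-optimal coupling gamma of rho' and rho along their common
  marginal rho.  Instead of disintegrating, glue approximately: couple mu and gamma independently
  inside each cube of a grid of mesh eta / d, so that the two copies of the base point are at
  distance at most eta.  The estimate (a + b)^2 <= (1 + t) a^2 + (1 + 1/t) b^2 then bounds the
  cost of the lift by (1 + t) W2(rho', rho)^2 + (1 + 1/t) eta^2.
*)

lemma ereal_divide_le_if_approx:
  fixes x s :: ereal and W c :: real
  assumes "0 < W" "0 < c" and approx: "\<And>\<delta>. 0 < \<delta> \<Longrightarrow> \<delta> < c \<Longrightarrow> x / ereal (W + \<delta>) \<le> s"
  shows "x / ereal W \<le> s"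
proof -
  have "((\<lambda>\<delta>. ereal (inverse (W + \<delta>))) \<longlongrightarrow> ereal (inverse (W + 0))) (at_right 0)"
    using \<open>0 < W\<close> by (intro tendsto_ereal tendsto_intros) auto
  then have "((\<lambda>\<delta>. x * ereal (inverse (W + \<delta>))) \<longlongrightarrow> x * ereal (inverse W)) (at_right 0)"
    using \<open>0 < W\<close> by (intro tendsto_cmult_ereal_general) auto
  moreover have "eventually (\<lambda>\<delta>. x * ereal (inverse (W + \<delta>)) \<le> s) (at_right 0)"
    unfolding eventually_at_right[OF \<open>0 < c\<close>]
  proof (intro exI[of _ c] conjI allI impI)
    fix \<delta> :: real assume "0 < \<delta>" "\<delta> < c"
    with approx[of \<delta>] \<open>0 < W\<close> show "x * ereal (inverse (W + \<delta>)) \<le> s"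
      by (simp add: divide_ereal_def)
  qed (use \<open>0 < c\<close> in simp)
  ultimately have "x * ereal (inverse W) \<le> s"
    by (intro tendsto_le[OF trivial_limit_at_right_real tendsto_const])
  then show ?thesis using \<open>0 < W\<close> by (simp add: divide_ereal_def)
qed

lemma ereal_divide_antimono:
  fixes x :: ereal and a b :: real
  assumes "0 \<le> x" "0 < a" "a \<le> b"
  shows "x / ereal b \<le> x / ereal a"
  using assms by (cases x) (auto intro: divide_left_mono)

definition slope_within :: "'m set \<Rightarrow> ('m \<Rightarrow> 'm \<Rightarrow> real) \<Rightarrow> ('m \<Rightarrow> ereal) \<Rightarrow> 'm \<Rightarrow> real \<Rightarrow> ereal" where
  "slope_within S d \<psi> v r =
     (SUP w\<in>{w\<in>S. 0 < d w v \<and> d w v < r}. max 0 (\<psi> v - \<psi> w) / ereal (d w v))"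

lemma slope_eq_INF_slope_within:
  "slope S d \<psi> v = (INF r\<in>{0<..}. max 0 (slope_within S d \<psi> v r))"
  unfolding slope_def slope_within_def ..

lemma slope_within_le_if_lipschitz:
  fixes p :: "'m \<Rightarrow> 'n" and \<Psi> :: "'m \<Rightarrow> ereal" and \<psi> :: "'n \<Rightarrow> ereal"
  assumes "v \<in> S" and maps_to: "p ` S \<subseteq> T"
    and nonneg: "\<And>u. u \<in> T \<Longrightarrow> 0 \<le> e u (p v)"
    and lipschitz: "\<And>w. w \<in> S \<Longrightarrow> e (p w) (p v) \<le> d w v"
    and eq_if_0: "\<And>w. w \<in> S \<Longrightarrow> e (p w) (p v) = 0 \<Longrightarrow> p w = p v"
    and factors: "\<And>w. w \<in> S \<Longrightarrow> \<Psi> w = \<psi> (p w)"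
    and finite: "\<bar>\<psi> (p v)\<bar> \<noteq> \<infinity>"
  shows "slope_within S d \<Psi> v r \<le> max 0 (slope_within T e \<psi> (p v) r)"
  unfolding slope_within_def [of S]
proof (rule SUP_least)
  fix w assume w: "w \<in> {w\<in>S. 0 < d w v \<and> d w v < r}"
  show "max 0 (\<Psi> v - \<Psi> w) / ereal (d w v) \<le> max 0 (slope_within T e \<psi> (p v) r)"
  proof (cases "e (p w) (p v) = 0")
    case True
    with w eq_if_0 have "p w = p v" by blast
    with w factors \<open>v \<in> S\<close> have "\<Psi> v - \<Psi> w = \<psi> (p v) - \<psi> (p v)" by simp
    also have "\<dots> = 0" using finite by (cases "\<psi> (p v)") auto
    finally show ?thesis by simp
  next
    case False
    have "p w \<in> T" using w maps_to by blast
    with False nonneg have "0 < e (p w) (p v)" by (simp add: order.not_eq_order_implies_strict)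
    moreover have "e (p w) (p v) \<le> d w v" using w lipschitz by blast
    ultimately have "max 0 (\<Psi> v - \<Psi> w) / ereal (d w v) \<le>
        max 0 (\<psi> (p v) - \<psi> (p w)) / ereal (e (p w) (p v))"
      using w factors \<open>v \<in> S\<close> by (simp add: ereal_divide_antimono)
    also have "\<dots> \<le> slope_within T e \<psi> (p v) r"
      unfolding slope_within_def
      using w \<open>p w \<in> T\<close> \<open>0 < e (p w) (p v)\<close> \<open>e (p w) (p v) \<le> d w v\<close> by (intro SUP_upper) auto
    finally show ?thesis by (rule order_trans) simp
  qed
qed

lemma slope_within_le_if_lift:
  fixes p :: "'m \<Rightarrow> 'n" and \<Psi> :: "'m \<Rightarrow> ereal" and \<psi> :: "'n \<Rightarrow> ereal"
  assumes "v \<in> S"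
    and lipschitz: "\<And>w. w \<in> S \<Longrightarrow> e (p w) (p v) \<le> d w v"
    and lift: "\<And>u \<delta>. u \<in> T \<Longrightarrow> 0 < \<delta> \<Longrightarrow> \<exists>w\<in>S. p w = u \<and> d w v \<le> e u (p v) + \<delta>"
    and factors: "\<And>w. w \<in> S \<Longrightarrow> \<Psi> w = \<psi> (p w)"
  shows "slope_within T e \<psi> (p v) r \<le> max 0 (slope_within S d \<Psi> v r)"
  unfolding slope_within_def [of T]
proof (rule SUP_least)
  fix u assume u: "u \<in> {u\<in>T. 0 < e u (p v) \<and> e u (p v) < r}"
  have "max 0 (\<psi> (p v) - \<psi> u) / ereal (e u (p v) + \<delta>) \<le> slope_within S d \<Psi> v r"
    if "0 < \<delta>" "\<delta> < r - e u (p v)" for \<delta>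
  proof -
    obtain w where "w \<in> S" "p w = u" "d w v \<le> e u (p v) + \<delta>"
      using lift u \<open>0 < \<delta>\<close> by blast
    moreover have "e u (p v) \<le> d w v" using lipschitz \<open>w \<in> S\<close> \<open>p w = u\<close> by blast
    ultimately have "max 0 (\<psi> (p v) - \<psi> u) / ereal (e u (p v) + \<delta>) \<le>
        max 0 (\<Psi> v - \<Psi> w) / ereal (d w v)"
      using u factors \<open>v \<in> S\<close> by (simp add: ereal_divide_antimono)
    also have "\<dots> \<le> slope_within S d \<Psi> v r"
      unfolding slope_within_def
      using \<open>w \<in> S\<close> \<open>e u (p v) \<le> d w v\<close> \<open>d w v \<le> e u (p v) + \<delta>\<close> u that by (intro SUP_upper) auto
    finally show ?thesis .
  qed
  then have "max 0 (\<psi> (p v) - \<psi> u) / ereal (e u (p v)) \<le> slope_within S d \<Psi> v r"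
    using u by (intro ereal_divide_le_if_approx[of "e u (p v)" "r - e u (p v)"]) auto
  then show "max 0 (\<psi> (p v) - \<psi> u) / ereal (e u (p v)) \<le> max 0 (slope_within S d \<Psi> v r)"
    by (rule order_trans) simp
qed

lemma slope_eq_if_lifting:
  fixes p :: "'m \<Rightarrow> 'n" and \<Psi> :: "'m \<Rightarrow> ereal" and \<psi> :: "'n \<Rightarrow> ereal"
  assumes "v \<in> S" and "p ` S \<subseteq> T"
    and "\<And>u. u \<in> T \<Longrightarrow> 0 \<le> e u (p v)"
    and "\<And>w. w \<in> S \<Longrightarrow> e (p w) (p v) \<le> d w v"
    and "\<And>w. w \<in> S \<Longrightarrow> e (p w) (p v) = 0 \<Longrightarrow> p w = p v"
    and "\<And>u \<delta>. u \<in> T \<Longrightarrow> 0 < \<delta> \<Longrightarrow> \<exists>w\<in>S. p w = u \<and> d w v \<le> e u (p v) + \<delta>"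
    and "\<And>w. w \<in> S \<Longrightarrow> \<Psi> w = \<psi> (p w)"
    and "\<bar>\<psi> (p v)\<bar> \<noteq> \<infinity>"
  shows "slope S d \<Psi> v = slope T e \<psi> (p v)"
proof -
  have "max 0 (slope_within S d \<Psi> v r) = max 0 (slope_within T e \<psi> (p v) r)" for r
  proof (intro antisym max.boundedI)
    show "slope_within S d \<Psi> v r \<le> max 0 (slope_within T e \<psi> (p v) r)"
      by (rule slope_within_le_if_lipschitz[where d = d and \<Psi> = \<Psi> and p = p and e = e and \<psi> = \<psi>,
            OF assms(1-5,7,8)])
    show "slope_within T e \<psi> (p v) r \<le> max 0 (slope_within S d \<Psi> v r)"
      by (rule slope_within_le_if_lift[where d = d and \<Psi> = \<Psi> and p = p and e = e and \<psi> = \<psi>,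
            OF assms(1,4,6,7)])
  qed simp_all
  then show ?thesis by (simp add: slope_eq_INF_slope_within)
qed

lemma distr_fst_density_pair_measure:
  assumes N: "sigma_finite_measure N" and [measurable]: "w \<in> borel_measurable (M \<Otimes>\<^sub>M N)"
    and one: "AE x in M. (\<integral>\<^sup>+y. w (x, y) \<partial>N) = 1"
  shows "distr (density (M \<Otimes>\<^sub>M N) w) M fst = M"
proof (rule measure_eqI)
  fix A assume "A \<in> sets (distr (density (M \<Otimes>\<^sub>M N) w) M fst)"
  then have [measurable]: "A \<in> sets M" by simp
  have "emeasure (distr (density (M \<Otimes>\<^sub>M N) w) M fst) A =
      (\<integral>\<^sup>+p. w p * indicator A (fst p) \<partial>(M \<Otimes>\<^sub>M N))"
    by (subst emeasure_distr, simp, simp, subst emeasure_density)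
       (auto intro!: nn_integral_cong simp: indicator_def space_pair_measure)
  also have "\<dots> = (\<integral>\<^sup>+x. (\<integral>\<^sup>+y. w (x, y) \<partial>N) * indicator A x \<partial>M)"
    by (subst sigma_finite_measure.nn_integral_fst[OF N, symmetric])
       (auto intro!: nn_integral_cong nn_integral_multc measurable_Pair2)
  also have "\<dots> = (\<integral>\<^sup>+x. indicator A x \<partial>M)"
    using one by (intro nn_integral_cong_AE) auto
  finally show "emeasure (distr (density (M \<Otimes>\<^sub>M N) w) M fst) A = emeasure M A"
    by simp
qed simp

lemma distr_snd_density_pair_measure:
  assumes MN: "pair_sigma_finite M N" and [measurable]: "w \<in> borel_measurable (M \<Otimes>\<^sub>M N)"
    and one: "AE y in N. (\<integral>\<^sup>+x. w (x, y) \<partial>M) = 1"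
  shows "distr (density (M \<Otimes>\<^sub>M N) w) N snd = N"
proof (rule measure_eqI)
  fix A assume "A \<in> sets (distr (density (M \<Otimes>\<^sub>M N) w) N snd)"
  then have [measurable]: "A \<in> sets N" by simp
  have "emeasure (distr (density (M \<Otimes>\<^sub>M N) w) N snd) A =
      (\<integral>\<^sup>+p. w p * indicator A (snd p) \<partial>(M \<Otimes>\<^sub>M N))"
    by (subst emeasure_distr, simp, simp, subst emeasure_density)
       (auto intro!: nn_integral_cong simp: indicator_def space_pair_measure)
  also have "\<dots> = (\<integral>\<^sup>+y. (\<integral>\<^sup>+x. w (x, y) \<partial>M) * indicator A y \<partial>N)"
    by (subst pair_sigma_finite.nn_integral_snd[OF MN, symmetric])
       (auto intro!: nn_integral_cong nn_integral_multc measurable_Pair1)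
  also have "\<dots> = (\<integral>\<^sup>+y. indicator A y \<partial>N)"
    using one by (intro nn_integral_cong_AE) auto
  finally show "emeasure (distr (density (M \<Otimes>\<^sub>M N) w) N snd) A = emeasure N A"
    by simp
qed simp

(* Renormalising the product measure inside every cell by its mass under the common image rho
   makes both marginals exact; this replaces a disintegration along rho. *)
definition cell_gluing_density :: "'x measure \<Rightarrow> ('x \<Rightarrow> 'k) \<Rightarrow> 'x \<Rightarrow> 'x \<Rightarrow> ennreal" where
  "cell_gluing_density \<rho> cell x y =
     (if cell x = cell y then 1 / emeasure \<rho> (cell -` {cell x} \<inter> space \<rho>) else 0)"

lemma cell_gluing_density_commute:
  "cell_gluing_density \<rho> cell x y = cell_gluing_density \<rho> cell y x"
  by (simp add: cell_gluing_density_def)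

lemma measurable_cell_gluing_density[measurable]:
  fixes cell :: "'x \<Rightarrow> 'k::countable"
  assumes [measurable]: "cell \<in> X \<rightarrow>\<^sub>M count_space UNIV" "f \<in> M \<rightarrow>\<^sub>M X" "g \<in> M \<rightarrow>\<^sub>M X"
  shows "(\<lambda>z. cell_gluing_density \<rho> cell (f z) (g z)) \<in> borel_measurable M"
proof -
  have "(\<lambda>z. (\<lambda>k z. if k = cell (g z) then 1 / emeasure \<rho> (cell -` {k} \<inter> space \<rho>) else 0)
      (cell (f z)) z) \<in> borel_measurable M"
    by (rule measurable_compose_countable) measurable
  then show ?thesis by (simp add: cell_gluing_density_def)
qed

lemma nn_integral_cell_gluing_density:
  fixes cell :: "'x \<Rightarrow> 'k::countable"
  assumes "prob_space N" and [measurable]: "g \<in> N \<rightarrow>\<^sub>M X"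
    and cell[measurable]: "cell \<in> X \<rightarrow>\<^sub>M count_space UNIV"
    and nonnull: "emeasure (distr N X g) (cell -` {cell x} \<inter> space X) \<noteq> 0"
  shows "(\<integral>\<^sup>+z. cell_gluing_density (distr N X g) cell x (g z) \<partial>N) = 1"
proof -
  interpret N: prob_space N by fact
  define A where "A = cell -` {cell x} \<inter> space X"
  have [measurable]: "A \<in> sets X"
    unfolding A_def by (rule measurable_sets[OF cell]) simp
  have A_distr: "emeasure (distr N X g) A = emeasure N (g -` A \<inter> space N)"
    by (rule emeasure_distr) auto
  have "(\<integral>\<^sup>+z. cell_gluing_density (distr N X g) cell x (g z) \<partial>N) =
      (\<integral>\<^sup>+z. (1 / emeasure N (g -` A \<inter> space N)) * indicator (g -` A \<inter> space N) z \<partial>N)"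
  proof (intro nn_integral_cong)
    fix z assume "z \<in> space N"
    then have "g z \<in> space X" by (rule measurable_space[OF \<open>g \<in> N \<rightarrow>\<^sub>M X\<close>])
    then show "cell_gluing_density (distr N X g) cell x (g z) =
        (1 / emeasure N (g -` A \<inter> space N)) * indicator (g -` A \<inter> space N) z"
      unfolding cell_gluing_density_def space_distr A_def[symmetric] A_distr
      using \<open>z \<in> space N\<close> by (auto simp: A_def indicator_def)
  qed
  also have "\<dots> = 1 / emeasure N (g -` A \<inter> space N) * emeasure N (g -` A \<inter> space N)"
    by (subst nn_integral_cmult_indicator) auto
  also have "\<dots> = 1"
  proof -
    have "emeasure N (g -` A \<inter> space N) \<noteq> 0" using nonnull A_distr by (simp add: A_def)
    moreover have "emeasure N (g -` A \<inter> space N) < \<infinity>"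
      using N.emeasure_finite[of "g -` A \<inter> space N"] by (simp add: less_top[symmetric])
    ultimately show ?thesis by (simp add: ennreal_divide_times)
  qed
  finally show ?thesis .
qed

lemma AE_cell_nonnull:
  fixes cell :: "'x \<Rightarrow> 'k::countable"
  assumes f: "f \<in> M \<rightarrow>\<^sub>M X" and cell: "cell \<in> X \<rightarrow>\<^sub>M count_space UNIV"
  shows "AE x in M. emeasure (distr M X f) (cell -` {cell (f x)} \<inter> space X) \<noteq> 0"
proof -
  let ?\<rho> = "distr M X f"
  have cell_sets: "cell -` K \<inter> space X \<in> sets X" for K
    by (rule measurable_sets[OF cell]) simp
  have "AE y in ?\<rho>. emeasure ?\<rho> (cell -` {cell y} \<inter> space X) \<noteq> 0"
  proof (rule AE_I')
    show "(\<Union>k\<in>{k. emeasure ?\<rho> (cell -` {k} \<inter> space X) = 0}. cell -` {k} \<inter> space X) \<in> null_sets ?\<rho>"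
      using cell_sets by (intro null_sets_UN') (auto simp: null_sets_def)
  qed auto
  moreover have "{y \<in> space X. emeasure ?\<rho> (cell -` {cell y} \<inter> space X) \<noteq> 0} \<in> sets X"
    using cell_sets[of "{k. emeasure ?\<rho> (cell -` {k} \<inter> space X) \<noteq> 0}"]
    by (simp add: Int_def conj_commute)
  ultimately show ?thesis by (simp add: AE_distr_iff[OF f])
qed

lemma cell_gluing:
  fixes cell :: "'x \<Rightarrow> 'k::countable"
  assumes "prob_space M" "prob_space N"
    and f[measurable]: "f \<in> M \<rightarrow>\<^sub>M X" and g[measurable]: "g \<in> N \<rightarrow>\<^sub>M X"
    and cell[measurable]: "cell \<in> X \<rightarrow>\<^sub>M count_space UNIV"
    and marginals: "distr M X f = distr N X g"
  defines "\<Gamma> \<equiv> density (M \<Otimes>\<^sub>M N) (\<lambda>p. cell_gluing_density (distr M X f) cell (f (fst p)) (g (snd p)))"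
  shows "distr \<Gamma> M fst = M" and "distr \<Gamma> N snd = N"
    and "AE p in \<Gamma>. cell (f (fst p)) = cell (g (snd p))"
proof -
  interpret P: pair_prob_space M N
    using assms(1,2) by (simp add: pair_prob_space_def pair_sigma_finite_def prob_space_imp_sigma_finite)
  have "AE x in M. (\<integral>\<^sup>+y. cell_gluing_density (distr M X f) cell (f x) (g y) \<partial>N) = 1"
    using AE_cell_nonnull[OF f cell]
    by eventually_elim (simp add: marginals nn_integral_cell_gluing_density[OF assms(2) g cell])
  then show "distr \<Gamma> M fst = M"
    unfolding \<Gamma>_def by (intro distr_fst_density_pair_measure) (auto simp: P.M2.sigma_finite_measure_axioms)
  have "AE y in N. (\<integral>\<^sup>+x. cell_gluing_density (distr M X f) cell (f x) (g y) \<partial>M) = 1"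
    using AE_cell_nonnull[OF g cell]
    by eventually_elim
       (subst cell_gluing_density_commute,
        simp add: marginals[symmetric] nn_integral_cell_gluing_density[OF assms(1) f cell])
  then show "distr \<Gamma> N snd = N"
    unfolding \<Gamma>_def by (intro distr_snd_density_pair_measure) (auto simp: P.pair_sigma_finite_axioms)
  show "AE p in \<Gamma>. cell (f (fst p)) = cell (g (snd p))"
    unfolding \<Gamma>_def by (subst AE_density) (auto simp: cell_gluing_density_def)
qed

lemma borel_measurable_fst[measurable]:
  "fst \<in> borel_measurable (borel :: ('a::second_countable_topology \<times> 'b::second_countable_topology) measure)"
  by (intro borel_measurable_continuous_onI continuous_intros)

lemma borel_measurable_snd[measurable]:
  "snd \<in> borel_measurable (borel :: ('a::second_countable_topology \<times> 'b::second_countable_topology) measure)"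
  by (intro borel_measurable_continuous_onI continuous_intros)

lemma borel_measurable_fst'[measurable (raw)]:
  fixes f :: "'c \<Rightarrow> 'a::second_countable_topology \<times> 'b::second_countable_topology"
  shows "f \<in> borel_measurable M \<Longrightarrow> (\<lambda>x. fst (f x)) \<in> borel_measurable M"
  using measurable_compose[OF _ borel_measurable_fst] by blast

lemma borel_measurable_snd'[measurable (raw)]:
  fixes f :: "'c \<Rightarrow> 'a::second_countable_topology \<times> 'b::second_countable_topology"
  shows "f \<in> borel_measurable M \<Longrightarrow> (\<lambda>x. snd (f x)) \<in> borel_measurable M"
  using measurable_compose[OF _ borel_measurable_snd] by blast

definition transport_cost :: "('a::euclidean_space \<times> 'a) measure \<Rightarrow> ennreal" where
  "transport_cost \<pi> = (\<integral>\<^sup>+p. ennreal ((dist (fst p) (snd p))\<^sup>2) \<partial>\<pi>)"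

definition optimal_cost :: "'a::euclidean_space measure \<Rightarrow> 'a measure \<Rightarrow> ennreal" where
  "optimal_cost \<mu> \<nu> = (INF \<pi>\<in>couplings \<mu> \<nu>. transport_cost \<pi>)"

lemma W2_optimal_cost: "W2 \<mu> \<nu> = sqrt (enn2real (optimal_cost \<mu> \<nu>))"
  unfolding W2_def optimal_cost_def transport_cost_def ..

lemma optimal_cost_le: "\<pi> \<in> couplings \<mu> \<nu> \<Longrightarrow> optimal_cost \<mu> \<nu> \<le> transport_cost \<pi>"
  unfolding optimal_cost_def by (rule INF_lower)

lemma couplingsD:
  assumes "\<pi> \<in> couplings \<mu> \<nu>"
  shows "prob_space \<pi>" "sets \<pi> = sets borel" "distr \<pi> borel fst = \<mu>" "distr \<pi> borel snd = \<nu>"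
  using assms unfolding couplings_def by auto

lemma distr_in_couplings:
  fixes g :: "'b \<Rightarrow> 'a::euclidean_space \<times> 'a"
  assumes "prob_space M" and [measurable]: "g \<in> M \<rightarrow>\<^sub>M borel"
  shows "distr M borel g \<in> couplings (distr M borel (\<lambda>x. fst (g x))) (distr M borel (\<lambda>x. snd (g x)))"
  unfolding couplings_def
  using prob_space.prob_space_distr[OF assms] by (auto simp: distr_distr comp_def)

lemma optimal_cost_distr_le:
  fixes f :: "'a::euclidean_space \<Rightarrow> 'b::euclidean_space"
  assumes [measurable]: "f \<in> borel_measurable borel"
    and lipschitz: "\<And>x y. dist (f x) (f y) \<le> dist x y"
  shows "optimal_cost (distr \<mu> borel f) (distr \<nu> borel f) \<le> optimal_cost \<mu> \<nu>"
  unfolding optimal_cost_def [of \<mu>]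
proof (rule INF_greatest)
  fix \<pi> assume \<pi>: "\<pi> \<in> couplings \<mu> \<nu>"
  note [measurable_cong] = couplingsD(2)[OF \<pi>]
  have "distr \<pi> borel (\<lambda>p. (f (fst p), f (snd p))) \<in> couplings (distr \<mu> borel f) (distr \<nu> borel f)"
    using distr_in_couplings[OF couplingsD(1)[OF \<pi>], of "\<lambda>p. (f (fst p), f (snd p))"]
    by (simp add: couplingsD(3,4)[OF \<pi>, symmetric] distr_distr comp_def)
  then have "optimal_cost (distr \<mu> borel f) (distr \<nu> borel f) \<le>
      transport_cost (distr \<pi> borel (\<lambda>p. (f (fst p), f (snd p))))"
    by (rule optimal_cost_le)
  also have "\<dots> = (\<integral>\<^sup>+p. ennreal ((dist (f (fst p)) (f (snd p)))\<^sup>2) \<partial>\<pi>)"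
    unfolding transport_cost_def by (subst nn_integral_distr) auto
  also have "\<dots> \<le> transport_cost \<pi>"
    unfolding transport_cost_def
    by (intro nn_integral_mono ennreal_leI power_mono lipschitz) auto
  finally show "optimal_cost (distr \<mu> borel f) (distr \<nu> borel f) \<le> transport_cost \<pi>" .
qed

lemma optimal_cost_commute: "optimal_cost \<mu> \<nu> = optimal_cost \<nu> \<mu>"
proof -
  have le: "optimal_cost b a \<le> optimal_cost a b" for a b :: "'a measure"
    unfolding optimal_cost_def [of a]
  proof (rule INF_greatest)
    fix \<pi> assume \<pi>: "\<pi> \<in> couplings a b"
    note [measurable_cong] = couplingsD(2)[OF \<pi>]
    have "distr \<pi> borel (\<lambda>p. (snd p, fst p)) \<in> couplings b a"
      using distr_in_couplings[OF couplingsD(1)[OF \<pi>], of "\<lambda>p. (snd p, fst p)"]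
      by (simp add: couplingsD(3,4)[OF \<pi>])
    then have "optimal_cost b a \<le> transport_cost (distr \<pi> borel (\<lambda>p. (snd p, fst p)))"
      by (rule optimal_cost_le)
    also have "\<dots> = transport_cost \<pi>"
      unfolding transport_cost_def by (subst nn_integral_distr) (auto simp: dist_commute)
    finally show "optimal_cost b a \<le> transport_cost \<pi>" .
  qed
  show ?thesis using le le by (rule antisym)
qed

definition second_moment :: "'a::real_normed_vector measure \<Rightarrow> ennreal" where
  "second_moment \<mu> = (\<integral>\<^sup>+x. ennreal ((norm x)\<^sup>2) \<partial>\<mu>)"

lemma P2_iff: "\<mu> \<in> P2 \<longleftrightarrow> prob_space \<mu> \<and> sets \<mu> = sets borel \<and> second_moment \<mu> < \<infinity>"
  unfolding P2_def second_moment_def by simp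

lemma P2D:
  assumes "\<mu> \<in> P2"
  shows "prob_space \<mu>" "sets \<mu> = sets borel" "second_moment \<mu> < \<infinity>"
  using assms by (simp_all add: P2_iff)

lemma second_moment_distr:
  fixes f :: "'b \<Rightarrow> 'a::euclidean_space"
  assumes "f \<in> M \<rightarrow>\<^sub>M borel"
  shows "second_moment (distr M borel f) = (\<integral>\<^sup>+x. ennreal ((norm (f x))\<^sup>2) \<partial>M)"
  unfolding second_moment_def using assms by (rule nn_integral_distr) measurable

lemma P2_distr:
  fixes f :: "'a::euclidean_space \<Rightarrow> 'b::euclidean_space"
  assumes \<mu>: "\<mu> \<in> P2" and [measurable]: "f \<in> borel_measurable borel"
    and norm_le: "\<And>x. norm (f x) \<le> norm x"
  shows "distr \<mu> borel f \<in> P2"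
proof -
  note [measurable_cong] = P2D(2)[OF \<mu>]
  have "second_moment (distr \<mu> borel f) = (\<integral>\<^sup>+x. ennreal ((norm (f x))\<^sup>2) \<partial>\<mu>)"
    by (rule second_moment_distr) measurable
  also have "\<dots> \<le> second_moment \<mu>"
    unfolding second_moment_def by (intro nn_integral_mono ennreal_leI power_mono norm_le) simp
  also have "\<dots> < \<infinity>" by (rule P2D(3)[OF \<mu>])
  moreover have "prob_space (distr \<mu> borel f)"
    by (rule prob_space.prob_space_distr[OF P2D(1)[OF \<mu>]]) measurable
  ultimately show ?thesis by (simp add: P2_iff)
qed

lemma P2_distr_fst: "\<mu> \<in> P2 \<Longrightarrow> distr \<mu> borel fst \<in> P2"
  by (rule P2_distr) (auto simp: norm_Pair intro: real_sqrt_le_mono)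

lemma P2_distr_snd: "\<mu> \<in> P2 \<Longrightarrow> distr \<mu> borel snd \<in> P2"
  by (rule P2_distr) (auto simp: norm_Pair intro: real_sqrt_le_mono)

lemma P2_pairI:
  fixes \<nu> :: "('a::euclidean_space \<times> 'b::euclidean_space) measure"
  assumes "prob_space \<nu>" and sets_\<nu>[measurable_cong]: "sets \<nu> = sets borel"
    and fst_\<nu>: "distr \<nu> borel fst \<in> P2" and snd_\<nu>: "distr \<nu> borel snd \<in> P2"
  shows "\<nu> \<in> P2"
proof -
  have "second_moment \<nu> =
      (\<integral>\<^sup>+p. ennreal ((norm (fst p))\<^sup>2) \<partial>\<nu>) + (\<integral>\<^sup>+p. ennreal ((norm (snd p))\<^sup>2) \<partial>\<nu>)"
    unfolding second_moment_def
    by (subst nn_integral_add[symmetric]) (auto simp: norm_Pair ennreal_plus intro!: nn_integral_cong)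
  also have "\<dots> = second_moment (distr \<nu> borel fst) + second_moment (distr \<nu> borel snd)"
    by (simp add: second_moment_distr)
  also have "\<dots> < \<infinity>" using P2D(3)[OF fst_\<nu>] P2D(3)[OF snd_\<nu>] by (simp add: less_top)
  finally show ?thesis using assms(1,2) by (simp add: P2_iff)
qed

lemma pair_measure_in_couplings:
  fixes \<mu> \<nu> :: "'a::euclidean_space measure"
  assumes "prob_space \<mu>" "sets \<mu> = sets borel" "prob_space \<nu>" "sets \<nu> = sets borel"
  shows "\<mu> \<Otimes>\<^sub>M \<nu> \<in> couplings \<mu> \<nu>"
proof -
  interpret P: pair_prob_space \<mu> \<nu>
    using assms(1,3) by (simp add: pair_prob_space_def pair_sigma_finite_def prob_space_imp_sigma_finite)
  have sets_pair: "sets (\<mu> \<Otimes>\<^sub>M \<nu>) = sets borel"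
    using sets_pair_measure_cong[OF assms(2,4)] by (simp only: borel_prod)
  have "distr (\<mu> \<Otimes>\<^sub>M \<nu>) borel fst = distr (\<mu> \<Otimes>\<^sub>M \<nu>) \<mu> fst"
    using assms(2) by (intro distr_cong) auto
  also have "\<dots> = \<mu>" by (rule P.M2.distr_pair_fst)
  finally have fst: "distr (\<mu> \<Otimes>\<^sub>M \<nu>) borel fst = \<mu>" .
  have snd: "distr (\<mu> \<Otimes>\<^sub>M \<nu>) borel snd = \<nu>"
  proof (rule measure_eqI)
    fix A assume "A \<in> sets (distr (\<mu> \<Otimes>\<^sub>M \<nu>) borel snd)"
    then have A: "A \<in> sets \<nu>" using assms(4) by simp
    have "emeasure (distr (\<mu> \<Otimes>\<^sub>M \<nu>) borel snd) A = emeasure (\<mu> \<Otimes>\<^sub>M \<nu>) (space \<mu> \<times> A)"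
      using A assms(2,4) sets.sets_into_space[OF A]
      by (subst emeasure_distr) (auto simp: space_pair_measure intro!: arg_cong[where f = "emeasure _"])
    also have "\<dots> = emeasure \<nu> A"
      using P.M2.emeasure_pair_measure_Times[OF sets.top[of \<mu>] A] by (simp add: P.M1.emeasure_space_1)
    finally show "emeasure (distr (\<mu> \<Otimes>\<^sub>M \<nu>) borel snd) A = emeasure \<nu> A" .
  qed (use assms(4) in simp)
  show ?thesis
    unfolding couplings_def using P.prob_space_axioms sets_pair fst snd by simp
qed

lemma transport_cost_le_moments:
  assumes \<pi>: "\<pi> \<in> couplings \<mu> \<nu>"
  shows "transport_cost \<pi> \<le> 2 * second_moment \<mu> + 2 * second_moment \<nu>"
proof -
  note [measurable_cong] = couplingsD(2)[OF \<pi>]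
  have dist_sq: "(dist x y)\<^sup>2 \<le> 2 * (norm x)\<^sup>2 + 2 * (norm y)\<^sup>2" for x y :: 'a
  proof -
    have "(dist x y)\<^sup>2 \<le> (norm x + norm y)\<^sup>2"
      by (intro power_mono) (auto simp: dist_norm norm_triangle_ineq4)
    also have "\<dots> \<le> 2 * (norm x)\<^sup>2 + 2 * (norm y)\<^sup>2"
      using zero_le_power2[of "norm x - norm y"] by (simp add: power2_eq_square algebra_simps)
    finally show ?thesis .
  qed
  have "transport_cost \<pi> \<le>
      (\<integral>\<^sup>+p. ennreal (2 * (norm (fst p))\<^sup>2) + ennreal (2 * (norm (snd p))\<^sup>2) \<partial>\<pi>)"
    unfolding transport_cost_def
    by (intro nn_integral_mono) (simp add: ennreal_plus[symmetric] ennreal_leI dist_sq del: ennreal_plus)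
  also have "\<dots> = 2 * second_moment (distr \<pi> borel fst) + 2 * second_moment (distr \<pi> borel snd)"
    by (simp add: ennreal_mult' nn_integral_add nn_integral_cmult second_moment_distr)
  finally show ?thesis by (simp add: couplingsD(3,4)[OF \<pi>])
qed

(* Needed because W2 reads an infinite optimal cost as 0 (enn2real of infinity is 0). *)
lemma optimal_cost_P2_finite:
  assumes \<mu>: "\<mu> \<in> P2" and \<nu>: "\<nu> \<in> P2"
  shows "optimal_cost \<mu> \<nu> < \<infinity>"
proof -
  have \<pi>: "\<mu> \<Otimes>\<^sub>M \<nu> \<in> couplings \<mu> \<nu>"
    using P2D(1,2)[OF \<mu>] P2D(1,2)[OF \<nu>] by (rule pair_measure_in_couplings)
  have "optimal_cost \<mu> \<nu> \<le> 2 * second_moment \<mu> + 2 * second_moment \<nu>"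
    using optimal_cost_le[OF \<pi>] transport_cost_le_moments[OF \<pi>] by (rule order_trans)
  also have "\<dots> < \<infinity>"
    using P2D(3)[OF \<mu>] P2D(3)[OF \<nu>] by (simp add: ennreal_mult_less_top)
  finally show ?thesis .
qed

lemma W2_distr_le:
  fixes f :: "'a::euclidean_space \<Rightarrow> 'b::euclidean_space"
  assumes "\<mu> \<in> P2" "\<nu> \<in> P2" "f \<in> borel_measurable borel" "\<And>x y. dist (f x) (f y) \<le> dist x y"
  shows "W2 (distr \<mu> borel f) (distr \<nu> borel f) \<le> W2 \<mu> \<nu>"
  unfolding W2_optimal_cost
  using optimal_cost_distr_le[OF assms(3,4)] optimal_cost_P2_finite[OF assms(1,2)]
  by (intro real_sqrt_le_mono enn2real_mono) auto

lemma emeasure_far_le_transport_cost: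
  assumes [measurable_cong]: "sets \<pi> = sets borel" and "0 < e"
  shows "ennreal (e\<^sup>2) * emeasure \<pi> {p. e < dist (fst p) (snd p)} \<le> transport_cost \<pi>"
proof -
  have "ennreal (e\<^sup>2) * emeasure \<pi> {p. e < dist (fst p) (snd p)} =
      (\<integral>\<^sup>+p. ennreal (e\<^sup>2) * indicator {p. e < dist (fst p) (snd p)} p \<partial>\<pi>)"
    by (subst nn_integral_cmult_indicator) auto
  also have "\<dots> \<le> transport_cost \<pi>"
    unfolding transport_cost_def using \<open>0 < e\<close>
    by (intro nn_integral_mono) (auto simp: indicator_def intro!: ennreal_leI power_mono)
  finally show ?thesis .
qed

lemma emeasure_le_thickening:
  fixes C :: "'a::euclidean_space set"
  assumes \<pi>: "\<pi> \<in> couplings \<mu> \<nu>" and [measurable]: "C \<in> sets borel"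
  shows "emeasure \<mu> C \<le> emeasure \<nu> {x. infdist x C \<le> e} + emeasure \<pi> {p. e < dist (fst p) (snd p)}"
proof -
  note [measurable_cong] = couplingsD(2)[OF \<pi>]
  have [measurable]: "(\<lambda>x. infdist x C) \<in> borel_measurable borel"
    by (intro borel_measurable_continuous_onI continuous_intros)
  have "infdist (snd p) C \<le> e" if "fst p \<in> C" "dist (fst p) (snd p) \<le> e" for p
    using infdist_le[OF that(1), of "snd p"] that(2) by (simp add: dist_commute)
  then have "{p. fst p \<in> C} \<subseteq> {p. infdist (snd p) C \<le> e} \<union> {p. e < dist (fst p) (snd p)}"
    by (auto simp: not_less)
  then have "emeasure \<pi> {p. fst p \<in> C} \<le>
      emeasure \<pi> ({p. infdist (snd p) C \<le> e} \<union> {p. e < dist (fst p) (snd p)})"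
    by (intro emeasure_mono) measurable
  also have "\<dots> \<le> emeasure \<pi> {p. infdist (snd p) C \<le> e} + emeasure \<pi> {p. e < dist (fst p) (snd p)}"
    by (intro emeasure_subadditive) measurable
  finally show ?thesis
    using emeasure_distr[of fst \<pi> borel C] emeasure_distr[of snd \<pi> borel "{x. infdist x C \<le> e}"]
    by (simp add: couplingsD(3,4)[OF \<pi>] sets_eq_imp_space_eq[OF couplingsD(2)[OF \<pi>]] vimage_def)
qed

lemma emeasure_le_thickening_if_optimal_cost_eq_0:
  fixes C :: "'a::euclidean_space set"
  assumes cost: "optimal_cost \<mu> \<nu> = 0" and "C \<in> sets borel" and "0 < e"
  shows "emeasure \<mu> C \<le> emeasure \<nu> {x. infdist x C \<le> e}"
proof (rule ennreal_le_epsilon)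
  fix s :: real assume "0 < s"
  with cost \<open>0 < e\<close> have "optimal_cost \<mu> \<nu> < ennreal (e\<^sup>2 * s)" by simp
  then obtain \<pi> where \<pi>: "\<pi> \<in> couplings \<mu> \<nu>" and "transport_cost \<pi> < ennreal (e\<^sup>2 * s)"
    unfolding optimal_cost_def by (auto simp: INF_less_iff)
  with emeasure_far_le_transport_cost[OF couplingsD(2)[OF \<pi>] \<open>0 < e\<close>]
  have "ennreal (e\<^sup>2) * emeasure \<pi> {p. e < dist (fst p) (snd p)} < ennreal (e\<^sup>2) * ennreal s"
    using \<open>0 < s\<close> by (simp add: ennreal_mult)
  then have "emeasure \<pi> {p. e < dist (fst p) (snd p)} \<le> ennreal s"
    by (meson linorder_not_le mult_left_mono order.strict_iff_not zero_le)
  then show "emeasure \<mu> C \<le> emeasure \<nu> {x. infdist x C \<le> e} + ennreal s"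
    using emeasure_le_thickening[OF \<pi> \<open>C \<in> sets borel\<close>, of e] by (meson add_left_mono order_trans)
qed

lemma emeasure_closed_le_if_optimal_cost_eq_0:
  fixes C :: "'a::euclidean_space set"
  assumes cost: "optimal_cost \<mu> \<nu> = 0" and "closed C" and "prob_space \<nu>" and "sets \<nu> = sets borel"
  shows "emeasure \<mu> C \<le> emeasure \<nu> C"
proof (cases "C = {}")
  case False
  interpret \<nu>: prob_space \<nu> by fact
  have C_borel: "C \<in> sets borel" using \<open>closed C\<close> by (simp add: borel_closed)
  have [measurable]: "(\<lambda>x. infdist x C) \<in> borel_measurable borel"
    by (intro borel_measurable_continuous_onI continuous_intros)
  define D where "D n = {x. infdist x C \<le> 1 / real (Suc n)}" for n
  have "(\<Inter>n. D n) = C"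
  proof safe
    fix x assume x: "x \<in> (\<Inter>n. D n)"
    have "infdist x C \<le> 0"
    proof (rule field_le_epsilon)
      fix \<epsilon> :: real assume "0 < \<epsilon>"
      then obtain n where "inverse (real (Suc n)) < \<epsilon>" by (meson reals_Archimedean)
      moreover have "infdist x C \<le> 1 / real (Suc n)" using x by (simp add: D_def)
      ultimately show "infdist x C \<le> 0 + \<epsilon>" by (simp add: inverse_eq_divide)
    qed
    then show "x \<in> C" using in_closed_iff_infdist_zero[OF \<open>closed C\<close> False] infdist_nonneg[of x C] by simp
  qed (simp add: D_def)
  moreover have "emeasure \<nu> (\<Inter>n. D n) = (INF n. emeasure \<nu> (D n))"
    unfolding D_def
    by (intro INF_emeasure_decseq[symmetric] decseq_SucI)
       (auto simp: \<open>sets \<nu> = sets borel\<close> intro: order_trans[OF _ divide_left_mono])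
  ultimately show ?thesis
    using emeasure_le_thickening_if_optimal_cost_eq_0[OF cost C_borel] unfolding D_def
    by (auto intro: INF_greatest)
qed simp

lemma measure_eq_if_optimal_cost_eq_0:
  fixes \<mu> \<nu> :: "'a::euclidean_space measure"
  assumes cost: "optimal_cost \<mu> \<nu> = 0"
    and "prob_space \<mu>" "sets \<mu> = sets borel" "prob_space \<nu>" "sets \<nu> = sets borel"
  shows "\<mu> = \<nu>"
proof (rule measure_eqI_generator_eq[where E = "Collect closed" and \<Omega> = UNIV and A = "\<lambda>_. UNIV"])
  have cost': "optimal_cost \<nu> \<mu> = 0" using cost by (simp add: optimal_cost_commute)
  show "emeasure \<mu> C = emeasure \<nu> C" if "C \<in> Collect closed" for C
    using that emeasure_closed_le_if_optimal_cost_eq_0[OF cost _ assms(4,5)]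
      emeasure_closed_le_if_optimal_cost_eq_0[OF cost' _ assms(2,3)]
    by (auto intro: antisym)
  show "sets \<mu> = sigma_sets UNIV (Collect closed)" "sets \<nu> = sigma_sets UNIV (Collect closed)"
    unfolding assms(3,5) by (subst borel_eq_closed; simp add: sets_measure_of)+
  show "emeasure \<mu> UNIV \<noteq> \<infinity>"
    using prob_space.emeasure_space_1[OF assms(2)] sets_eq_imp_space_eq[OF assms(3)] by simp
qed (auto simp: Int_stable_def)

lemma W2_eq_0_imp_eq:
  assumes "\<mu> \<in> P2" "\<nu> \<in> P2" "W2 \<mu> \<nu> = 0"
  shows "\<mu> = \<nu>"
proof (rule measure_eq_if_optimal_cost_eq_0)
  show "optimal_cost \<mu> \<nu> = 0"
    using assms(3) optimal_cost_P2_finite[OF assms(1,2)] unfolding W2_optimal_cost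
    by (cases "optimal_cost \<mu> \<nu>" rule: ennreal_cases) auto
qed (use P2D[OF assms(1)] P2D[OF assms(2)] in auto)

(* Cells are indexed by int lists (floors along a fixed enumeration of the basis) so that the
   index type is countable. *)
definition grid_cell :: "real \<Rightarrow> 'a::euclidean_space \<Rightarrow> int list" where
  "grid_cell h x = map (\<lambda>b. \<lfloor>(x \<bullet> b) / h\<rfloor>) (SOME bs. set bs = Basis)"

lemma set_some_Basis_list: "set (SOME bs. set bs = (Basis :: 'a::euclidean_space set)) = Basis"
  using someI_ex[OF finite_list[OF finite_Basis]] .

lemma grid_cell_measurable[measurable]:
  "grid_cell h \<in> (borel :: 'a::euclidean_space measure) \<rightarrow>\<^sub>M count_space UNIV"
proof (subst measurable_count_space_eq2_countable, safe)
  fix k :: "int list"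
  define bs where "bs = (SOME bs. set bs = (Basis :: 'a set))"
  have "grid_cell h -` {k} \<inter> space borel =
      {x::'a. length k = length bs \<and> (\<forall>i<length bs. \<lfloor>(x \<bullet> bs ! i) / h\<rfloor> = k ! i)}"
    by (auto simp: grid_cell_def bs_def[symmetric] list_eq_iff_nth_eq)
  also have "\<dots> \<in> sets borel" by measurable
  finally show "grid_cell h -` {k} \<inter> space borel \<in> sets (borel :: 'a measure)" .
qed simp

lemma dist_le_if_grid_cell_eq:
  fixes x y :: "'a::euclidean_space"
  assumes "0 < h" and same_cell: "grid_cell h x = grid_cell h y"
  shows "dist x y \<le> real DIM('a) * h"
proof -
  define bs where "bs = (SOME bs. set bs = (Basis :: 'a set))"
  have "\<bar>(x - y) \<bullet> b\<bar> \<le> h" if "b \<in> Basis" for b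
  proof -
    obtain i where i: "i < length bs" "bs ! i = b"
      using \<open>b \<in> Basis\<close> set_some_Basis_list[where 'a='a] by (metis bs_def in_set_conv_nth)
    from same_cell have "grid_cell h x ! i = grid_cell h y ! i" by simp
    then have "\<lfloor>(x \<bullet> b) / h\<rfloor> = \<lfloor>(y \<bullet> b) / h\<rfloor>"
      using i by (simp add: grid_cell_def bs_def[symmetric])
    then have "\<bar>(x \<bullet> b) / h - (y \<bullet> b) / h\<bar> < 1" by linarith
    then have "\<bar>(x \<bullet> b) - (y \<bullet> b)\<bar> / h < 1"
      using \<open>0 < h\<close> by (simp add: diff_divide_distrib[symmetric])
    then show ?thesis using \<open>0 < h\<close> by (simp add: inner_diff_left field_simps)
  qed
  then have "norm (x - y) \<le> (\<Sum>b\<in>(Basis :: 'a set). h)"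
    by (intro order_trans[OF norm_le_l1] sum_mono)
  then show ?thesis by (simp add: dist_norm)
qed

lemma power2_dist_triangle_weighted:
  fixes x y z :: "'a::metric_space"
  assumes "0 < t"
  shows "(dist x z)\<^sup>2 \<le> (1 + t) * (dist x y)\<^sup>2 + (1 + 1 / t) * (dist y z)\<^sup>2"
proof -
  define a b where "a = dist x y" and "b = dist y z"
  have "0 \<le> (t * a - b)\<^sup>2 / t" using assms by simp
  then have "2 * a * b \<le> t * a\<^sup>2 + b\<^sup>2 / t"
    using assms by (simp add: power2_eq_square field_simps)
  then have "(a + b)\<^sup>2 \<le> (1 + t) * a\<^sup>2 + (1 + 1 / t) * b\<^sup>2"
    by (simp add: power2_eq_square algebra_simps)
  moreover have "(dist x z)\<^sup>2 \<le> (a + b)\<^sup>2"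
    unfolding a_def b_def by (intro power_mono dist_triangle) simp
  ultimately show ?thesis unfolding a_def b_def by linarith
qed

lemma ennreal_power2_dist_le_weighted:
  fixes x y z :: "'a::metric_space"
  assumes "0 < t" and "dist y z \<le> \<eta>"
  shows "ennreal ((dist x z)\<^sup>2) \<le> ennreal (1 + t) * ennreal ((dist x y)\<^sup>2) + ennreal ((1 + 1 / t) * \<eta>\<^sup>2)"
proof -
  have "(1 + 1 / t) * (dist y z)\<^sup>2 \<le> (1 + 1 / t) * \<eta>\<^sup>2"
    using assms by (intro mult_left_mono power_mono) auto
  then have "(dist x z)\<^sup>2 \<le> (1 + t) * (dist x y)\<^sup>2 + (1 + 1 / t) * \<eta>\<^sup>2"
    using power2_dist_triangle_weighted[OF \<open>0 < t\<close>, where x = x and y = y and z = z] by linarith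
  then show ?thesis
    using \<open>0 < t\<close> by (simp add: ennreal_mult[symmetric] ennreal_plus[symmetric] ennreal_leI del: ennreal_plus)
qed

lemma exists_approximate_gluing:
  fixes \<mu> :: "('a::euclidean_space \<times> 'b::euclidean_space) measure"
    and \<gamma> :: "('c::euclidean_space \<times> 'a) measure"
  assumes "prob_space \<mu>" and sets_\<mu>[measurable_cong]: "sets \<mu> = sets borel"
    and "prob_space \<gamma>" and sets_\<gamma>[measurable_cong]: "sets \<gamma> = sets borel"
    and marginals: "distr \<mu> borel fst = distr \<gamma> borel snd" and "0 < \<eta>"
  obtains \<Gamma> where "prob_space \<Gamma>" "sets \<Gamma> = sets borel"
    "distr \<Gamma> borel fst = \<mu>" "distr \<Gamma> borel snd = \<gamma>"
    "AE p in \<Gamma>. dist (fst (fst p)) (snd (snd p)) \<le> \<eta>"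
proof
  define h where "h = \<eta> / real DIM('a)"
  have "0 < h" using \<open>0 < \<eta>\<close> by (simp add: h_def)
  define \<Gamma> where "\<Gamma> = density (\<mu> \<Otimes>\<^sub>M \<gamma>)
    (\<lambda>p. cell_gluing_density (distr \<mu> borel fst) (grid_cell h) (fst (fst p)) (snd (snd p)))"
  have "fst \<in> \<mu> \<rightarrow>\<^sub>M borel" "snd \<in> \<gamma> \<rightarrow>\<^sub>M borel" by measurable
  note glue = cell_gluing[OF assms(1,3) this grid_cell_measurable[of h] marginals, folded \<Gamma>_def]
  have "sets \<Gamma> = sets (borel \<Otimes>\<^sub>M borel)"
    using sets_pair_measure_cong[OF sets_\<mu> sets_\<gamma>] by (simp add: \<Gamma>_def)
  then show sets_\<Gamma>: "sets \<Gamma> = sets borel" by (simp only: borel_prod)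
  have "distr \<Gamma> borel fst = distr \<Gamma> \<mu> fst" "distr \<Gamma> borel snd = distr \<Gamma> \<gamma> snd"
    by (auto intro!: distr_cong simp: sets_\<mu> sets_\<gamma>)
  with glue(1,2) show \<Gamma>_fst: "distr \<Gamma> borel fst = \<mu>" and "distr \<Gamma> borel snd = \<gamma>"
    by simp_all
  have "fst \<in> \<Gamma> \<rightarrow>\<^sub>M borel"
    unfolding measurable_cong_sets[OF sets_\<Gamma> refl] by (rule borel_measurable_fst)
  then show "prob_space \<Gamma>"
    by (rule prob_space_distrD) (simp add: \<Gamma>_fst \<open>prob_space \<mu>\<close>)
  show "AE p in \<Gamma>. dist (fst (fst p)) (snd (snd p)) \<le> \<eta>"
    using glue(3)
  proof eventually_elim
    case (elim p)
    then have "dist (fst (fst p)) (snd (snd p)) \<le> real DIM('a) * h"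
      by (rule dist_le_if_grid_cell_eq[OF \<open>0 < h\<close>])
    then show ?case by (simp add: h_def)
  qed
qed

lemma exists_lift_near_coupling:
  fixes \<mu> :: "('a::euclidean_space \<times> 'a) measure"
  assumes \<mu>: "\<mu> \<in> P2" and \<rho>': "\<rho>' \<in> P2" and \<gamma>: "\<gamma> \<in> couplings \<rho>' (distr \<mu> borel fst)"
    and "0 < \<eta>" "0 < t"
  shows "\<exists>\<nu>\<in>P2. distr \<nu> borel fst = \<rho>' \<and>
    optimal_cost \<nu> \<mu> \<le> ennreal (1 + t) * transport_cost \<gamma> + ennreal ((1 + 1 / t) * \<eta>\<^sup>2)"
proof -
  obtain \<Gamma> where "prob_space \<Gamma>" and [measurable_cong]: "sets \<Gamma> = sets borel"
    and \<Gamma>_fst: "distr \<Gamma> borel fst = \<mu>" and \<Gamma>_snd: "distr \<Gamma> borel snd = \<gamma>"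
    and close: "AE p in \<Gamma>. dist (fst (fst p)) (snd (snd p)) \<le> \<eta>"
    using exists_approximate_gluing[OF P2D(1,2)[OF \<mu>] couplingsD(1,2)[OF \<gamma>]
        couplingsD(4)[OF \<gamma>, symmetric] \<open>0 < \<eta>\<close>] .
  interpret \<Gamma>: prob_space \<Gamma> by fact
  \<comment> \<open>For \<open>((x, v), (y, x')) \<sim> \<Gamma>\<close>, the lift is the law of \<open>(y, v)\<close>; it is
    coupled with \<mu> through \<open>x\<close>, which is close to \<open>x'\<close>.\<close>
  define \<nu> where "\<nu> = distr \<Gamma> borel (\<lambda>p. (fst (snd p), snd (fst p)))"
  have "distr \<nu> borel fst = distr (distr \<Gamma> borel snd) borel fst"
    by (simp add: \<nu>_def distr_distr comp_def)
  with \<Gamma>_snd have \<nu>_fst: "distr \<nu> borel fst = \<rho>'" by (simp add: couplingsD(3)[OF \<gamma>])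
  have "distr \<nu> borel snd = distr (distr \<Gamma> borel fst) borel snd"
    by (simp add: \<nu>_def distr_distr comp_def)
  with \<Gamma>_fst have \<nu>_snd: "distr \<nu> borel snd = distr \<mu> borel snd" by simp
  have "prob_space \<nu>" "sets \<nu> = sets borel"
    unfolding \<nu>_def by (auto intro: \<Gamma>.prob_space_distr)
  then have "\<nu> \<in> P2"
    using P2_distr_snd[OF \<mu>] \<rho>' by (intro P2_pairI) (auto simp: \<nu>_fst \<nu>_snd)
  have "distr \<Gamma> borel (\<lambda>p. ((fst (snd p), snd (fst p)), fst p)) \<in> couplings \<nu> \<mu>"
    using distr_in_couplings[OF \<Gamma>.prob_space_axioms, of "\<lambda>p. ((fst (snd p), snd (fst p)), fst p)"]
    by (simp add: \<nu>_def \<Gamma>_fst)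
  then have "optimal_cost \<nu> \<mu> \<le> transport_cost (distr \<Gamma> borel (\<lambda>p. ((fst (snd p), snd (fst p)), fst p)))"
    by (rule optimal_cost_le)
  also have "\<dots> = (\<integral>\<^sup>+p. ennreal ((dist (fst (snd p)) (fst (fst p)))\<^sup>2) \<partial>\<Gamma>)"
  proof -
    have "dist (x, snd q) q = dist x (fst q)" for x and q :: "'a \<times> 'a"
      by (cases q) (simp add: dist_Pair_Pair)
    then show ?thesis by (simp add: transport_cost_def nn_integral_distr)
  qed
  also have "\<dots> \<le> (\<integral>\<^sup>+p. ennreal (1 + t) * ennreal ((dist (fst (snd p)) (snd (snd p)))\<^sup>2)
      + ennreal ((1 + 1 / t) * \<eta>\<^sup>2) \<partial>\<Gamma>)"
    using close
    by (intro nn_integral_mono_AE, elim eventually_mono)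
       (rule ennreal_power2_dist_le_weighted[OF \<open>0 < t\<close>], simp add: dist_commute)
  also have "\<dots> = ennreal (1 + t) * transport_cost \<gamma> + ennreal ((1 + 1 / t) * \<eta>\<^sup>2)"
    using \<Gamma>_snd \<Gamma>.emeasure_space_1
    by (subst nn_integral_add) (auto simp: nn_integral_cmult transport_cost_def nn_integral_distr)
  finally show ?thesis using \<open>\<nu> \<in> P2\<close> \<nu>_fst by blast
qed

lemma exists_lift_optimal_cost_le:
  fixes \<mu> :: "('a::euclidean_space \<times> 'a) measure"
  assumes \<mu>: "\<mu> \<in> P2" and \<rho>': "\<rho>' \<in> P2" and "0 < \<epsilon>"
  shows "\<exists>\<nu>\<in>P2. distr \<nu> borel fst = \<rho>' \<and>
    optimal_cost \<nu> \<mu> \<le> optimal_cost \<rho>' (distr \<mu> borel fst) + ennreal \<epsilon>"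
proof -
  obtain r where r: "optimal_cost \<rho>' (distr \<mu> borel fst) = ennreal r" "0 \<le> r"
    using optimal_cost_P2_finite[OF \<rho>' P2_distr_fst[OF \<mu>]]
    by (cases "optimal_cost \<rho>' (distr \<mu> borel fst)" rule: ennreal_cases) auto
  \<comment> \<open>Each of \<open>s\<close>, \<open>t * (r + 1)\<close> and \<open>c * \<eta>\<^sup>2\<close> is at most \<open>\<epsilon> / 3\<close>.\<close>
  define t where "t = \<epsilon> / (3 * (r + 1))"
  define s where "s = min 1 (\<epsilon> / 3)"
  define c where "c = 1 + 1 / t"
  define \<eta> where "\<eta> = sqrt (\<epsilon> / (3 * c))"
  have "0 < t" "0 < s" "0 < c" using \<open>0 < \<epsilon>\<close> r(2) by (auto simp: t_def s_def c_def add_pos_pos)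
  then have "0 < \<eta>" using \<open>0 < \<epsilon>\<close> by (simp add: \<eta>_def)
  have "optimal_cost \<rho>' (distr \<mu> borel fst) < ennreal (r + s)" using r \<open>0 < s\<close> by simp
  then obtain \<gamma> where \<gamma>: "\<gamma> \<in> couplings \<rho>' (distr \<mu> borel fst)" and "transport_cost \<gamma> < ennreal (r + s)"
    unfolding optimal_cost_def by (auto simp: INF_less_iff)
  obtain \<nu> where "\<nu> \<in> P2" "distr \<nu> borel fst = \<rho>'"
    and \<nu>_cost: "optimal_cost \<nu> \<mu> \<le> ennreal (1 + t) * transport_cost \<gamma> + ennreal (c * \<eta>\<^sup>2)"
    using exists_lift_near_coupling[OF \<mu> \<rho>' \<gamma> \<open>0 < \<eta>\<close> \<open>0 < t\<close>] unfolding c_def by blast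
  note \<nu>_cost
  also have "\<dots> \<le> ennreal ((1 + t) * (r + s)) + ennreal (\<epsilon> / 3)"
  proof (rule add_mono)
    have "ennreal (1 + t) * transport_cost \<gamma> \<le> ennreal (1 + t) * ennreal (r + s)"
      using \<open>transport_cost \<gamma> < ennreal (r + s)\<close> by (intro mult_left_mono) auto
    also have "\<dots> = ennreal ((1 + t) * (r + s))"
      using \<open>0 < t\<close> \<open>0 < s\<close> r(2) by (simp add: ennreal_mult)
    finally show "ennreal (1 + t) * transport_cost \<gamma> \<le> ennreal ((1 + t) * (r + s))" .
    show "ennreal (c * \<eta>\<^sup>2) \<le> ennreal (\<epsilon> / 3)"
      using \<open>0 < \<epsilon>\<close> \<open>0 < c\<close> by (simp add: \<eta>_def)
  qed
  also have "\<dots> \<le> ennreal (r + \<epsilon>)"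
  proof -
    have "t * (r + s) \<le> t * (r + 1)" using \<open>0 < t\<close> by (intro mult_left_mono) (auto simp: s_def)
    also have "\<dots> = \<epsilon> / 3" using r(2) by (simp add: t_def field_simps)
    finally have "(1 + t) * (r + s) + \<epsilon> / 3 \<le> r + \<epsilon>" by (simp add: s_def algebra_simps)
    then show ?thesis
      using \<open>0 < t\<close> \<open>0 < s\<close> \<open>0 < \<epsilon>\<close> r(2)
      by (simp add: ennreal_plus[symmetric] ennreal_leI del: ennreal_plus)
  qed
  finally show ?thesis using \<open>\<nu> \<in> P2\<close> \<open>distr \<nu> borel fst = \<rho>'\<close> r \<open>0 < \<epsilon>\<close> by auto
qed

lemma exists_lift_W2_le:
  fixes \<mu> :: "('a::euclidean_space \<times> 'a) measure"
  assumes \<mu>: "\<mu> \<in> P2" and \<rho>': "\<rho>' \<in> P2" and "0 < \<delta>"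
  shows "\<exists>\<nu>\<in>P2. distr \<nu> borel fst = \<rho>' \<and> W2 \<nu> \<mu> \<le> W2 \<rho>' (distr \<mu> borel fst) + \<delta>"
proof -
  define W where "W = W2 \<rho>' (distr \<mu> borel fst)"
  obtain r where r: "optimal_cost \<rho>' (distr \<mu> borel fst) = ennreal r" "0 \<le> r"
    using optimal_cost_P2_finite[OF \<rho>' P2_distr_fst[OF \<mu>]]
    by (cases "optimal_cost \<rho>' (distr \<mu> borel fst)" rule: ennreal_cases) auto
  have "W = sqrt r" "0 \<le> W" using r by (simp_all add: W_def W2_optimal_cost)
  then have "0 < (W + \<delta>)\<^sup>2 - r"
    using \<open>0 < \<delta>\<close> r(2) by (simp add: power2_eq_square algebra_simps add_pos_nonneg)
  from exists_lift_optimal_cost_le[OF \<mu> \<rho>' this] obtain \<nu> where "\<nu> \<in> P2" "distr \<nu> borel fst = \<rho>'"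
    and "optimal_cost \<nu> \<mu> \<le> ennreal r + ennreal ((W + \<delta>)\<^sup>2 - r)"
    unfolding r by blast
  then have "optimal_cost \<nu> \<mu> \<le> ennreal ((W + \<delta>)\<^sup>2)"
    using r(2) \<open>0 < (W + \<delta>)\<^sup>2 - r\<close> by (simp add: ennreal_plus[symmetric] del: ennreal_plus)
  then have "W2 \<nu> \<mu> \<le> sqrt ((W + \<delta>)\<^sup>2)"
    unfolding W2_optimal_cost by (intro real_sqrt_le_mono) (simp add: enn2real_leI)
  also have "\<dots> = W + \<delta>" using \<open>0 \<le> W\<close> \<open>0 < \<delta>\<close> by simp
  finally show ?thesis using \<open>\<nu> \<in> P2\<close> \<open>distr \<nu> borel fst = \<rho>'\<close> unfolding W_def by blast
qed

theorem mainTheorem8: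
  fixes \<phi> :: "('a::euclidean_space) measure \<Rightarrow> ereal"
    and \<Phi> :: "('a \<times> 'a) measure \<Rightarrow> ereal"
    and \<mu> :: "('a \<times> 'a) measure"
  assumes phi_range: "\<forall>\<nu>\<in>P2. \<phi> \<nu> \<noteq> -\<infinity>"
    and Phi_range: "\<forall>\<nu>\<in>P2. \<Phi> \<nu> \<noteq> -\<infinity>"
    and phi_lsc: "narrow_lsc \<phi>"
    and Phi_lsc: "narrow_lsc \<Phi>"
    and Phi_phi: "\<forall>\<nu>\<in>P2. \<Phi> \<nu> = \<phi> (distr \<nu> borel fst)"
    and mu: "\<mu> \<in> P2"
    and finite: "\<Phi> \<mu> < \<infinity>"
  shows "slope P2 W2 \<Phi> \<mu> = slope P2 W2 \<phi> (distr \<mu> borel fst)"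
proof (rule slope_eq_if_lifting)
  show "(\<lambda>\<nu>. distr \<nu> borel fst) ` P2 \<subseteq> P2" by (auto intro: P2_distr_fst)
  show "0 \<le> W2 \<rho> (distr \<mu> borel fst)" for \<rho> by (simp add: W2_optimal_cost)
  show "W2 (distr \<nu> borel fst) (distr \<mu> borel fst) \<le> W2 \<nu> \<mu>" if "\<nu> \<in> P2" for \<nu>
    using that mu by (rule W2_distr_le) (auto simp: dist_fst_le)
  show "distr \<nu> borel fst = distr \<mu> borel fst"
    if "\<nu> \<in> P2" "W2 (distr \<nu> borel fst) (distr \<mu> borel fst) = 0" for \<nu>
    using that mu by (intro W2_eq_0_imp_eq P2_distr_fst)
  show "\<exists>\<nu>\<in>P2. distr \<nu> borel fst = \<rho> \<and> W2 \<nu> \<mu> \<le> W2 \<rho> (distr \<mu> borel fst) + \<delta>"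
    if "\<rho> \<in> P2" "0 < \<delta>" for \<rho> \<delta>
    using mu that by (rule exists_lift_W2_le)
  show "\<bar>\<phi> (distr \<mu> borel fst)\<bar> \<noteq> \<infinity>"
    using finite phi_range Phi_phi mu P2_distr_fst[OF mu] by auto
qed (use mu Phi_phi in auto)

end
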